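(* Let $0<1/n_0\ll1/r\ll\alpha_1,\alpha_2<1$ and let $n\ge n_0$. Let $\preceq$ be a linear ordering of the edges of an $n$-vertex linear hypergraph $\mathcal H$ in which every edge $e$ satisfies $|e|\ge r$. Suppose that each edge $e\in\mathcal H$ is given a list $C(e)$ of colours with $|C(e)|\ge d^{\preceq}(e)+\alpha_1 n$. Then there is an $\alpha_2$-bounded proper edge-colouring $\phi$ of $\mathcal H$ with $\phi(e)\in C(e)$ for every $e\in\mathcal H$.
   Context: A hypergraph has a finite vertex set and a set of nonempty edges; linear means any two distinct edges share at most one vertex. $N(e)$ is the set of edges $f\ne e$ with $f\cap e\ne\varnothing$, and for a linear ordering $\preceq$, $d^{\preceq}(e)$ is the number of $f\in N(e)$ with $f\preceq e$. A proper edge-colouring $\phi$ of an $n$-vertex hypergraph is $\alpha$-bounded if every colour $c$ either is assigned to at most one edge, or the edges coloured $c$ cover at most $\alpha n$ vertices. Hierarchy: $r$ sufficiently large in terms of $\alpha_1,\alpha_2$, and $n_0$ sufficiently large in terms of $r$. *)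

theory Defs
  imports Complex_Main
begin

definition hypergraph :: "'a set \<Rightarrow> 'a set set \<Rightarrow> bool" where
  "hypergraph V E \<longleftrightarrow> finite V \<and> (\<forall>e\<in>E. e \<noteq> {} \<and> e \<subseteq> V)"

definition linear_hypergraph :: "'a set \<Rightarrow> 'a set set \<Rightarrow> bool" where
  "linear_hypergraph V E \<longleftrightarrow> hypergraph V E \<and>
     (\<forall>e\<in>E. \<forall>f\<in>E. e \<noteq> f \<longrightarrow> card (e \<inter> f) \<le> 1)"

definition edge_nbhd :: "'a set set \<Rightarrow> 'a set \<Rightarrow> 'a set set" where
  "edge_nbhd E e = {f \<in> E. f \<noteq> e \<and> f \<inter> e \<noteq> {}}"

text \<open>d^{R}(e): number of f in N(e) with f R-preceding-or-equal e (R a linear order on E,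
  given as a relation of pairs (f, e) meaning f \<preceq> e).\<close>
definition back_degree :: "'a set set \<Rightarrow> ('a set \<times> 'a set) set \<Rightarrow> 'a set \<Rightarrow> nat" where
  "back_degree E R e = card {f \<in> edge_nbhd E e. (f, e) \<in> R}"

definition proper_edge_colouring :: "'a set set \<Rightarrow> ('a set \<Rightarrow> 'c) \<Rightarrow> bool" where
  "proper_edge_colouring E \<phi> \<longleftrightarrow>
     (\<forall>e\<in>E. \<forall>f\<in>E. e \<noteq> f \<and> e \<inter> f \<noteq> {} \<longrightarrow> \<phi> e \<noteq> \<phi> f)"

definition bounded_colouring :: "real \<Rightarrow> nat \<Rightarrow> 'a set set \<Rightarrow> ('a set \<Rightarrow> 'c) \<Rightarrow> bool" where
  "bounded_colouring \<alpha> n E \<phi> \<longleftrightarrow>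
     proper_edge_colouring E \<phi> \<and>
     (\<forall>c. card {e \<in> E. \<phi> e = c} \<le> 1 \<or> real (card (\<Union>{e \<in> E. \<phi> e = c})) \<le> \<alpha> * real n)"

end

theory Submission
  imports Defs
begin

text \<open>In a linear hypergraph with edges of size at least r every vertex lies in at most
  n / (r - 1) edges, so the edge sizes sum to at most n^2 / (r - 1), which is small against
  \<alpha>1 \<alpha>2 n^2 once r is large. Hence fewer than \<alpha>1 n / 2 edges have more than \<alpha>2 n / 2
  vertices; these receive distinct colours from their lists, which are then reserved for them.
  The other edges are coloured greedily along the ordering, avoiding the colours of earlier
  neighbours, the reserved colours and the fewer than \<alpha>1 n / 2 colours whose class already
  covers more than \<alpha>2 n / 2 vertices. An edge of at most \<alpha>2 n / 2 vertices added to a class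
  covering at most \<alpha>2 n / 2 vertices keeps it \<alpha>2-bounded.\<close>

lemma hypergraph_finite_edges: "hypergraph V E \<Longrightarrow> finite E"
  unfolding hypergraph_def by (meson Pow_iff finite_Pow_iff finite_subset subsetI)

lemma linear_order_on_finite_has_greatest:
  assumes "linear_order_on E R" "finite A" "A \<noteq> {}" "A \<subseteq> E"
  shows "\<exists>e\<in>A. \<forall>f\<in>A. (f, e) \<in> R"
  using assms(2-4)
proof (induction A rule: finite_ne_induct)
  case (singleton x)
  then show ?case
    using assms(1) unfolding linear_order_on_def partial_order_on_def preorder_on_def refl_on_def
    by auto
next
  case (insert x A)
  then obtain m where m: "m \<in> A" "\<forall>f\<in>A. (f, m) \<in> R" by auto
  have "(x, x) \<in> R" "trans R" "x \<noteq> m \<Longrightarrow> (x, m) \<in> R \<or> (m, x) \<in> R"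
    using assms(1) insert m
    unfolding linear_order_on_def partial_order_on_def preorder_on_def refl_on_def total_on_def
    by auto
  then show ?case
    using m by (cases "(m, x) \<in> R") (auto dest: transD)
qed

lemma ex_inj_on_select:
  assumes "finite B" "\<forall>e\<in>B. card B \<le> card (C e)"
  shows "\<exists>g. inj_on g B \<and> (\<forall>e\<in>B. g e \<in> C e)"
  using assms
proof (induction B rule: finite_induct)
  case empty
  then show ?case by auto
next
  case (insert x B)
  then have "\<forall>e\<in>B. card B \<le> card (C e)" by auto
  then obtain g where g: "inj_on g B" "\<forall>e\<in>B. g e \<in> C e" using insert.IH by blast
  have "card (g ` B) < card (C x)"
    using insert card_image_le[of B g] by auto
  then have "\<not> C x \<subseteq> g ` B"
    by (meson card_mono finite_imageI insert(1) leD)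
  then obtain c where "c \<in> C x" "c \<notin> g ` B" by auto
  then have "inj_on (g(x := c)) (insert x B) \<and> (\<forall>e\<in>insert x B. (g(x := c)) e \<in> C e)"
    using g insert(2) by (auto simp: inj_on_def)
  then show ?case by blast
qed

text \<open>The edges through a vertex v are disjoint outside v, each contributing at least r - 1 vertices.\<close>
lemma linear_hypergraph_degree_bound:
  assumes "linear_hypergraph V E" "\<forall>e\<in>E. r \<le> card e"
  shows "card {f\<in>E. v \<in> f} * (r - 1) \<le> card V"
proof -
  have finV: "finite V" and sub: "\<forall>e\<in>E. e \<subseteq> V"
    and lin: "\<forall>e\<in>E. \<forall>f\<in>E. e \<noteq> f \<longrightarrow> card (e \<inter> f) \<le> 1"
    using assms(1) unfolding linear_hypergraph_def hypergraph_def by auto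
  define F where "F = {f\<in>E. v \<in> f}"
  have "finite E" using assms(1) hypergraph_finite_edges unfolding linear_hypergraph_def by blast
  then have finF: "finite F" unfolding F_def by simp
  have fin: "\<forall>f\<in>F. finite f" using sub finV F_def by (auto intro: finite_subset)
  have disj: "(f - {v}) \<inter> (g - {v}) = {}" if "f \<in> F" "g \<in> F" "f \<noteq> g" for f g
  proof -
    have "card (f \<inter> g) \<le> 1" "finite (f \<inter> g)" "v \<in> f \<inter> g"
      using lin fin that F_def by auto
    then have "f \<inter> g = {v}" using card_le_Suc0_iff_eq[of "f \<inter> g"] by auto
    then show ?thesis by auto
  qed
  have "card F * (r - 1) = (\<Sum>f\<in>F. r - 1)" by simp
  also have "\<dots> \<le> (\<Sum>f\<in>F. card (f - {v}))"
    using assms(2) fin F_def by (intro sum_mono) (auto simp: card_Diff_singleton)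
  also have "\<dots> = card (\<Union>f\<in>F. f - {v})"
    using fin disj by (intro card_UN_disjoint[symmetric] finF) auto
  also have "\<dots> \<le> card V" using finV sub F_def by (intro card_mono) auto
  finally show ?thesis unfolding F_def .
qed

lemma linear_hypergraph_sum_card_bound:
  assumes "linear_hypergraph V E" "\<forall>e\<in>E. r \<le> card e"
  shows "(\<Sum>f\<in>E. card f) * (r - 1) \<le> card V * card V"
proof -
  have finV: "finite V" and sub: "\<forall>e\<in>E. e \<subseteq> V" and finE: "finite E"
    using assms(1) hypergraph_finite_edges unfolding linear_hypergraph_def hypergraph_def by auto
  have "(\<Sum>f\<in>E. card f) = (\<Sum>f\<in>E. \<Sum>v\<in>V. if v \<in> f then 1 else 0)"
  proof (rule sum.cong)
    fix f assume "f \<in> E"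
    then have "{v\<in>V. v \<in> f} = f" using sub by auto
    then show "card f = (\<Sum>v\<in>V. if v \<in> f then 1 else 0)"
      using sum.inter_filter[OF finV, of "\<lambda>_. 1::nat" "\<lambda>v. v \<in> f"] by simp
  qed simp
  also have "\<dots> = (\<Sum>v\<in>V. \<Sum>f\<in>E. if v \<in> f then 1 else 0)" by (rule sum.swap)
  also have "\<dots> = (\<Sum>v\<in>V. card {f\<in>E. v \<in> f})"
    using sum.inter_filter[OF finE, of "\<lambda>_. 1::nat"] by simp
  finally have "(\<Sum>f\<in>E. card f) * (r - 1) = (\<Sum>v\<in>V. card {f\<in>E. v \<in> f} * (r - 1))"
    by (simp add: sum_distrib_right)
  also have "\<dots> \<le> (\<Sum>v\<in>V. card V)"
    using linear_hypergraph_degree_bound[OF assms] by (intro sum_mono) auto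
  finally show ?thesis by simp
qed

lemma card_heavy_colours:
  fixes \<phi> :: "'a set \<Rightarrow> 'c" and t :: real
  assumes "finite D"
  shows "real (card {c \<in> \<phi> ` D. t < real (card (\<Union>{f\<in>D. \<phi> f = c}))}) * t
           \<le> real (\<Sum>f\<in>D. card f)"
proof -
  define H where "H = {c \<in> \<phi> ` D. t < real (card (\<Union>{f\<in>D. \<phi> f = c}))}"
  have finH: "finite H" using assms H_def by auto
  have "real (card H) * t = (\<Sum>c\<in>H. t)" by simp
  also have "\<dots> \<le> (\<Sum>c\<in>H. real (\<Sum>f\<in>{f\<in>D. \<phi> f = c}. card f))"
  proof (rule sum_mono)
    fix c assume "c \<in> H"
    then have "t < real (card (\<Union>{f\<in>D. \<phi> f = c}))" using H_def by auto
    moreover have "card (\<Union>{f\<in>D. \<phi> f = c}) \<le> (\<Sum>f\<in>{f\<in>D. \<phi> f = c}. card f)"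
      by (rule card_Union_le_sum_card)
    ultimately show "t \<le> real (\<Sum>f\<in>{f\<in>D. \<phi> f = c}. card f)" by linarith
  qed
  also have "\<dots> = real (\<Sum>c\<in>H. \<Sum>f\<in>{f\<in>{f\<in>D. \<phi> f \<in> H}. \<phi> f = c}. card f)"
    unfolding of_nat_sum[symmetric] by (intro arg_cong[where f = real] sum.cong) auto
  also have "\<dots> = real (\<Sum>f\<in>{f\<in>D. \<phi> f \<in> H}. card f)"
    using assms finH by (subst sum.group) auto
  also have "\<dots> \<le> real (\<Sum>f\<in>D. card f)"
    using assms by (intro of_nat_mono sum_mono2) auto
  finally show ?thesis unfolding H_def .
qed

lemma bounded_colouring_insert:
  assumes \<phi>: "bounded_colouring \<alpha> n D \<phi>" and "e \<notin> D"
    and small: "2 * real (card e) \<le> \<alpha> * real n"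
    and free: "c \<notin> \<phi> ` {f\<in>D. f \<inter> e \<noteq> {}}"
    and light: "c \<in> \<phi> ` D \<Longrightarrow> 2 * real (card (\<Union>{f\<in>D. \<phi> f = c})) \<le> \<alpha> * real n"
  shows "bounded_colouring \<alpha> n (insert e D) (\<phi>(e := c))"
proof -
  have "proper_edge_colouring (insert e D) (\<phi>(e := c))"
    using \<phi> free \<open>e \<notin> D\<close>
    unfolding bounded_colouring_def proper_edge_colouring_def by (auto simp: Int_commute)
  moreover have "card {x \<in> insert e D. (\<phi>(e := c)) x = c'} \<le> 1 \<or>
      real (card (\<Union>{x \<in> insert e D. (\<phi>(e := c)) x = c'})) \<le> \<alpha> * real n" for c'
  proof (cases "c' = c")
    case False
    then have "{x \<in> insert e D. (\<phi>(e := c)) x = c'} = {x\<in>D. \<phi> x = c'}"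
      using \<open>e \<notin> D\<close> by auto
    then show ?thesis using \<phi> unfolding bounded_colouring_def by auto
  next
    case True
    define K where "K = {x\<in>D. \<phi> x = c}"
    have colour_class: "{x \<in> insert e D. (\<phi>(e := c)) x = c'} = insert e K"
      using True \<open>e \<notin> D\<close> K_def by auto
    show ?thesis
    proof (cases "K = {}")
      case True
      then show ?thesis using colour_class by auto
    next
      case False
      then have "2 * real (card (\<Union>K)) \<le> \<alpha> * real n" using light K_def by auto
      moreover have "real (card (\<Union>(insert e K))) \<le> real (card e) + real (card (\<Union>K))"
        using card_Un_le[of e "\<Union>K"] by simp
      ultimately show ?thesis using colour_class small by simp
    qed
  qed
  ultimately show ?thesis unfolding bounded_colouring_def by blast
qed

lemma greedy_bounded_list_colouring:
  fixes \<alpha> k :: real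
  assumes E: "finite E" "D \<subseteq> E" and lo: "linear_order_on E R" and pos: "0 < \<alpha> * real n"
    and small: "\<forall>e\<in>D. 2 * real (card e) \<le> \<alpha> * real n"
    and lists: "\<forall>e\<in>D. real (back_degree E R e) + k \<le> real (card (C e))"
    and Bc: "finite Bc"
    and total: "2 * real (\<Sum>f\<in>D. card f) < (k - real (card Bc)) * (\<alpha> * real n)"
  shows "\<exists>\<phi>. bounded_colouring \<alpha> n D \<phi> \<and> (\<forall>e\<in>D. \<phi> e \<in> C e - Bc)"
proof -
  have finD: "finite D" using E finite_subset by blast
  then show ?thesis
  proof (induction rule: finite_remove_induct)
    case empty
    then show ?case by (auto simp: bounded_colouring_def proper_edge_colouring_def)
  next
    case (remove A)
    then obtain e where e: "e \<in> A" "\<forall>f\<in>A. (f, e) \<in> R"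
      using linear_order_on_finite_has_greatest[OF lo remove(1,2)] remove(3) E(2) by blast
    define D' where "D' = A - {e}"
    obtain \<phi> where \<phi>: "bounded_colouring \<alpha> n D' \<phi>" "\<forall>f\<in>D'. \<phi> f \<in> C f - Bc"
      using remove.IH e D'_def by blast
    have finD': "finite D'" using remove D'_def by auto
    have eD: "e \<in> D" using e remove by auto
    define N where "N = \<phi> ` {f\<in>D'. f \<inter> e \<noteq> {}}"
    define H where "H = {c \<in> \<phi> ` D'. \<alpha> * real n / 2 < real (card (\<Union>{f\<in>D'. \<phi> f = c}))}"
    have "card N \<le> card {f\<in>D'. f \<inter> e \<noteq> {}}"
      unfolding N_def using finD' by (intro card_image_le) auto
    also have "\<dots> \<le> back_degree E R e"
      unfolding back_degree_def edge_nbhd_def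
      using e remove E D'_def by (intro card_mono) auto
    finally have cardN: "card N \<le> back_degree E R e" .
    have "real (card H) * (\<alpha> * real n / 2) \<le> real (\<Sum>f\<in>D'. card f)"
      unfolding H_def using card_heavy_colours[OF finD'] .
    also have "\<dots> \<le> real (\<Sum>f\<in>D. card f)"
      using finD remove D'_def by (intro of_nat_mono sum_mono2) auto
    finally have "real (card H) * (\<alpha> * real n) < (k - real (card Bc)) * (\<alpha> * real n)"
      using total by linarith
    then have cardH: "real (card H) < k - real (card Bc)"
      by (rule mult_right_less_imp_less) (use pos in auto)
    have "real (card (N \<union> Bc \<union> H)) \<le> real (card N) + real (card Bc) + real (card H)"
      using card_Un_le[of "N \<union> Bc" H] card_Un_le[of N Bc] by linarith
    moreover have "real (back_degree E R e) + k \<le> real (card (C e))" using lists eD by blast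
    ultimately have "card (N \<union> Bc \<union> H) < card (C e)" using cardN cardH by linarith
    moreover have "finite (N \<union> Bc \<union> H)" using finD' Bc N_def H_def by auto
    ultimately have "\<not> C e \<subseteq> N \<union> Bc \<union> H" by (meson card_mono leD)
    then obtain c where c: "c \<in> C e" "c \<notin> N" "c \<notin> Bc" "c \<notin> H" by blast
    have A: "A = insert e D'" using e D'_def by auto
    have "bounded_colouring \<alpha> n A (\<phi>(e := c))"
      unfolding A using \<phi>(1) small eD c N_def H_def D'_def
      by (intro bounded_colouring_insert) auto
    moreover have "\<forall>f\<in>A. (\<phi>(e := c)) f \<in> C f - Bc" using A \<phi>(2) c by auto
    ultimately show ?case by blast
  qed
qed

lemma bounded_colouring_Un_rainbow:
  assumes \<phi>: "bounded_colouring \<alpha> n D \<phi>" and g: "inj_on g B"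
    and "B \<inter> D = {}" and avoid: "\<forall>e\<in>D. \<phi> e \<notin> g ` B"
  shows "bounded_colouring \<alpha> n (B \<union> D) (\<lambda>e. if e \<in> B then g e else \<phi> e)"
    (is "bounded_colouring _ _ _ ?\<psi>")
proof -
  have "?\<psi> e \<noteq> ?\<psi> f" if "e \<in> B \<union> D" "f \<in> B \<union> D" "e \<noteq> f" "e \<inter> f \<noteq> {}" for e f
  proof (cases "e \<in> B"; cases "f \<in> B")
    assume "e \<in> B" "f \<in> B"
    then show ?thesis using g that(3) by (auto dest: inj_onD)
  next
    assume "e \<in> B" "f \<notin> B"
    then show ?thesis using avoid that(2) by force
  next
    assume "e \<notin> B" "f \<in> B"
    then show ?thesis using avoid that(1) by force
  next
    assume "e \<notin> B" "f \<notin> B"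
    then show ?thesis
      using \<phi> that unfolding bounded_colouring_def proper_edge_colouring_def by auto
  qed
  then have "proper_edge_colouring (B \<union> D) ?\<psi>"
    unfolding proper_edge_colouring_def by blast
  moreover have "card {e \<in> B \<union> D. ?\<psi> e = c} \<le> 1 \<or>
      real (card (\<Union>{e \<in> B \<union> D. ?\<psi> e = c})) \<le> \<alpha> * real n" for c
  proof (cases "c \<in> g ` B")
    case True
    then obtain b where "b \<in> B" "c = g b" by auto
    then have "{e \<in> B \<union> D. ?\<psi> e = c} \<subseteq> {b}"
      using g avoid by (auto simp: inj_on_def)
    then have "card {e \<in> B \<union> D. ?\<psi> e = c} \<le> card {b}" by (intro card_mono) auto
    then show ?thesis by simp
  next
    case False
    then have "{e \<in> B \<union> D. ?\<psi> e = c} = {e\<in>D. \<phi> e = c}"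
      using \<open>B \<inter> D = {}\<close> by auto
    then show ?thesis using \<phi> unfolding bounded_colouring_def by auto
  qed
  ultimately show ?thesis unfolding bounded_colouring_def by blast
qed

lemma linear_hypergraph_bounded_list_colouring:
  fixes \<alpha>1 \<alpha>2 :: real
  assumes \<alpha>: "0 < \<alpha>1" "0 < \<alpha>2" and r: "4 < \<alpha>1 * \<alpha>2 * (real r - 1)"
    and H: "linear_hypergraph V E" "card V = n" "0 < n" "\<forall>e\<in>E. r \<le> card e"
    and lo: "linear_order_on E R"
    and lists: "\<forall>e\<in>E. finite (C e) \<and> real (back_degree E R e) + \<alpha>1 * real n \<le> real (card (C e))"
  shows "\<exists>\<phi>. bounded_colouring \<alpha>2 n E \<phi> \<and> (\<forall>e\<in>E. \<phi> e \<in> C e)"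
proof -
  define T where "T = (\<Sum>f\<in>E. card f)"
  have finE: "finite E" using H(1) hypergraph_finite_edges unfolding linear_hypergraph_def by blast
  have \<alpha>n: "0 < \<alpha>2 * real n" using \<alpha> H(3) by simp
  have "0 < \<alpha>1 * \<alpha>2" using \<alpha> by simp
  have "r \<noteq> 0"
  proof
    assume "r = 0"
    then have "4 < - (\<alpha>1 * \<alpha>2)" using r by simp
    then show False using \<open>0 < \<alpha>1 * \<alpha>2\<close> by linarith
  qed
  have "T * (r - 1) \<le> n * n"
    using linear_hypergraph_sum_card_bound[OF H(1) H(4)] H(2) unfolding T_def by simp
  then have "real (T * (r - 1)) \<le> real (n * n)"
    by (simp only: of_nat_le_iff)
  then have "real T * (real r - 1) \<le> real n * real n"
    using \<open>r \<noteq> 0\<close> by (simp add: of_nat_diff)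
  then have T_small: "4 * real T < \<alpha>1 * \<alpha>2 * (real n * real n)"
  proof (cases "T = 0")
    case True
    then show ?thesis using \<alpha> H(3) by simp
  next
    case False
    have "4 * real T < \<alpha>1 * \<alpha>2 * (real r - 1) * real T"
      using mult_strict_right_mono[OF r, of "real T"] False by simp
    also have "\<dots> = \<alpha>1 * \<alpha>2 * (real T * (real r - 1))" by (simp add: algebra_simps)
    also have "\<dots> \<le> \<alpha>1 * \<alpha>2 * (real n * real n)"
      using \<open>real T * (real r - 1) \<le> real n * real n\<close> \<alpha> by (simp add: mult_left_mono)
    finally show ?thesis .
  qed
  define B where "B = {e\<in>E. \<alpha>2 * real n < 2 * real (card e)}"
  define S where "S = E - B"
  have finB: "finite B" using finE B_def by auto
  have T_split: "T = (\<Sum>f\<in>S. card f) + (\<Sum>f\<in>B. card f)"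
    unfolding T_def S_def using finE B_def by (intro sum.subset_diff) auto
  have "real (card B) * (\<alpha>2 * real n) = (\<Sum>f\<in>B. \<alpha>2 * real n)" by simp
  also have "\<dots> \<le> (\<Sum>f\<in>B. 2 * real (card f))" using B_def by (intro sum_mono) auto
  also have "\<dots> \<le> 2 * real T" using T_split by (simp add: sum_nonneg flip: sum_distrib_left)
  finally have "(2 * real (card B)) * (\<alpha>2 * real n) < (\<alpha>1 * real n) * (\<alpha>2 * real n)"
    using T_small by (simp add: algebra_simps)
  then have card_B: "2 * real (card B) < \<alpha>1 * real n"
    by (rule mult_right_less_imp_less) (use \<alpha>n in auto)
  have "\<forall>e\<in>B. card B \<le> card (C e)"
  proof
    fix e assume "e \<in> B"
    then have "\<alpha>1 * real n \<le> real (card (C e))" using lists B_def by auto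
    then show "card B \<le> card (C e)" using card_B by simp
  qed
  then obtain g where g: "inj_on g B" "\<forall>e\<in>B. g e \<in> C e"
    using ex_inj_on_select[OF finB] by blast
  have "2 * real (\<Sum>f\<in>S. card f) \<le> 2 * real T" using T_split by (simp add: sum_nonneg)
  also have "\<dots> < (\<alpha>1 * real n / 2) * (\<alpha>2 * real n)" using T_small by (simp add: algebra_simps)
  also have "\<dots> < (\<alpha>1 * real n - real (card (g ` B))) * (\<alpha>2 * real n)"
    using card_B g(1) by (intro mult_strict_right_mono[OF _ \<alpha>n]) (simp add: card_image)
  finally have S_total:
    "2 * real (\<Sum>f\<in>S. card f) < (\<alpha>1 * real n - real (card (g ` B))) * (\<alpha>2 * real n)" .
  have "S \<subseteq> E" "\<forall>e\<in>S. 2 * real (card e) \<le> \<alpha>2 * real n"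
    "\<forall>e\<in>S. real (back_degree E R e) + \<alpha>1 * real n \<le> real (card (C e))"
    using S_def B_def lists by auto
  then obtain \<phi> where \<phi>: "bounded_colouring \<alpha>2 n S \<phi>" "\<forall>e\<in>S. \<phi> e \<in> C e - g ` B"
    using greedy_bounded_list_colouring[OF finE _ lo \<alpha>n _ _ _ S_total] finB by blast
  have "bounded_colouring \<alpha>2 n (B \<union> S) (\<lambda>e. if e \<in> B then g e else \<phi> e)"
    using \<phi> g(1) S_def by (intro bounded_colouring_Un_rainbow) auto
  moreover have "B \<union> S = E" using B_def S_def by auto
  moreover have "\<forall>e\<in>E. (if e \<in> B then g e else \<phi> e) \<in> C e" using g(2) \<phi>(2) S_def by auto
  ultimately show ?thesis by auto
qed

theorem proposition6p9:
  fixes \<alpha>1 \<alpha>2 :: real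
  assumes "0 < \<alpha>1" "\<alpha>1 < 1" "0 < \<alpha>2" "\<alpha>2 < 1"
  shows "\<exists>r0::nat. \<forall>r\<ge>r0. \<exists>n0::nat. \<forall>n\<ge>n0.
     \<forall>(V::'a set) (E::'a set set) (R::('a set \<times> 'a set) set) (C::'a set \<Rightarrow> 'c set).
       linear_hypergraph V E \<and> card V = n \<and> (\<forall>e\<in>E. card e \<ge> r) \<and>
       linear_order_on E R \<and>
       (\<forall>e\<in>E. finite (C e) \<and> real (card (C e)) \<ge> real (back_degree E R e) + \<alpha>1 * real n)
       \<longrightarrow> (\<exists>\<phi>::'a set \<Rightarrow> 'c. proper_edge_colouring E \<phi> \<and> bounded_colouring \<alpha>2 n E \<phi> \<and>
               (\<forall>e\<in>E. \<phi> e \<in> C e))"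
proof -
  define r0 where "r0 = nat \<lceil>4 / (\<alpha>1 * \<alpha>2)\<rceil> + 2"
  have r_large: "4 < \<alpha>1 * \<alpha>2 * (real r - 1)" if "r0 \<le> r" for r
  proof -
    have "4 / (\<alpha>1 * \<alpha>2) < real r - 1" using that r0_def by linarith
    then show ?thesis using assms by (simp add: field_simps)
  qed
  show ?thesis
  proof (rule exI[of _ r0], intro allI impI, rule exI[of _ "1::nat"], intro allI impI, elim conjE)
    fix r n :: nat and V :: "'a set" and E R and C :: "'a set \<Rightarrow> 'c set"
    assume "r0 \<le> r" "1 \<le> n" and H: "linear_hypergraph V E" "card V = n" "\<forall>e\<in>E. r \<le> card e"
      and lo: "linear_order_on E R"
      and lists: "\<forall>e\<in>E. finite (C e) \<and> real (back_degree E R e) + \<alpha>1 * real n \<le> real (card (C e))"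
    have "0 < n" using \<open>1 \<le> n\<close> by simp
    then obtain \<phi> :: "'a set \<Rightarrow> 'c" where "bounded_colouring \<alpha>2 n E \<phi>" "\<forall>e\<in>E. \<phi> e \<in> C e"
      using linear_hypergraph_bounded_list_colouring[OF assms(1,3) r_large[OF \<open>r0 \<le> r\<close>] H(1,2)
          _ H(3) lo lists] by blast
    then show "\<exists>\<phi>. proper_edge_colouring E \<phi> \<and> bounded_colouring \<alpha>2 n E \<phi> \<and> (\<forall>e\<in>E. \<phi> e \<in> C e)"
      unfolding bounded_colouring_def by blast
  qed
qed

end
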